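(* For every $n\ge 2$, $\lceil \log_2 n\rceil \le \mathrm{isat}(n,\mathcal{D}_2)\le n+1$.
   Context: $\mathcal{B}_n$ denotes the Boolean lattice $(2^{[n]},\subseteq)$. A family $\mathcal{F}\subseteq 2^{[n]}$ (ordered by inclusion) is induced-$\mathcal{P}$-saturated if it contains no induced copy of $\mathcal{P}$ (an injection $f$ with $u\le v\iff f(u)\subseteq f(v)$) but every family $\mathcal{F}'$ with $\mathcal{F}\subsetneq\mathcal{F}'\subseteq 2^{[n]}$ contains one. $\mathrm{isat}(n,\mathcal{P})$ is the minimum size of an induced-$\mathcal{P}$-saturated family in $\mathcal{B}_n$. $\mathcal{D}_2$ (the diamond) is the four-element poset $\{A,B,C,D\}$ with $A<B<D$, $A<C<D$, and $B,C$ incomparable. *)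

theory Defs
  imports Complex_Main
begin

definition induced_copy :: "'p set \<Rightarrow> ('p \<Rightarrow> 'p \<Rightarrow> bool) \<Rightarrow> 'a set set \<Rightarrow> bool" where
  "induced_copy P le F \<longleftrightarrow>
     (\<exists>f. inj_on f P \<and> f ` P \<subseteq> F \<and> (\<forall>u\<in>P. \<forall>v\<in>P. le u v \<longleftrightarrow> f u \<subseteq> f v))"

definition induced_saturated :: "nat \<Rightarrow> 'p set \<Rightarrow> ('p \<Rightarrow> 'p \<Rightarrow> bool) \<Rightarrow> nat set set \<Rightarrow> bool" where
  "induced_saturated n P le F \<longleftrightarrow>
     F \<subseteq> Pow {0..<n} \<and> \<not> induced_copy P le F \<and>
     (\<forall>F'. F \<subset> F' \<and> F' \<subseteq> Pow {0..<n} \<longrightarrow> induced_copy P le F')"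

definition isat :: "nat \<Rightarrow> 'p set \<Rightarrow> ('p \<Rightarrow> 'p \<Rightarrow> bool) \<Rightarrow> nat" where
  "isat n P le = Min {card F | F. induced_saturated n P le F}"

text \<open>The diamond D_2 on {A,B,C,D} = {0,1,2,3}: A < B < D, A < C < D, B and C incomparable.\<close>

definition diamond_carrier :: "nat set" where
  "diamond_carrier = {0, 1, 2, 3}"

definition diamond_le :: "nat \<Rightarrow> nat \<Rightarrow> bool" where
  "diamond_le u v \<longleftrightarrow> u = v \<or> u = 0 \<or> v = 3"

end

theory Submission
  imports Defs
begin

text \<open>A chain of n+1 initial segments is diamond-saturated, giving the upper bound. For the lower
  bound, in a diamond-saturated family F any two points i \<noteq> j are separated by a member of F:
  otherwise one can add a set S \<notin> F (A with i added, for A maximal among the members avoiding i,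
  or A with i removed, for A minimal when every member contains i) whose comparabilities with
  F are mirrored by A \<in> F, so a diamond through S would yield a diamond through A. Hence
  i \<mapsto> {B \<in> F. i \<in> B} is injective, so n \<le> 2^|F|.\<close>

definition has_diamond :: "'a set set \<Rightarrow> bool" where
  "has_diamond F \<longleftrightarrow> (\<exists>a\<in>F. \<exists>b\<in>F. \<exists>c\<in>F. \<exists>d\<in>F.
      a \<subset> b \<and> a \<subset> c \<and> b \<subset> d \<and> c \<subset> d \<and> \<not> b \<subseteq> c \<and> \<not> c \<subseteq> b)"

lemma has_diamondI:
  assumes "a \<in> F" "b \<in> F" "c \<in> F" "d \<in> F"
    and "a \<subset> b" "a \<subset> c" "b \<subset> d" "c \<subset> d" "\<not> b \<subseteq> c" "\<not> c \<subseteq> b"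
  shows "has_diamond F"
  using assms unfolding has_diamond_def by blast

lemma induced_copy_diamond_iff: "induced_copy diamond_carrier diamond_le F \<longleftrightarrow> has_diamond F"
proof
  assume "induced_copy diamond_carrier diamond_le F"
  then obtain f :: "nat \<Rightarrow> 'a set" where f: "f ` diamond_carrier \<subseteq> F"
    and le: "\<forall>u\<in>diamond_carrier. \<forall>v\<in>diamond_carrier. diamond_le u v \<longleftrightarrow> f u \<subseteq> f v"
    unfolding induced_copy_def by blast
  have rel: "(u = v \<or> u = 0 \<or> v = 3) \<longleftrightarrow> f u \<subseteq> f v"
    if "u \<in> {0, 1, 2, 3}" "v \<in> {0, 1, 2, 3}" for u v
    using le that by (auto simp: diamond_carrier_def diamond_le_def)
  have "f 0 \<subset> f 1" "f 0 \<subset> f 2" "f 1 \<subset> f 3" "f 2 \<subset> f 3" "\<not> f 1 \<subseteq> f 2" "\<not> f 2 \<subseteq> f 1"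
    using rel[of 0 1] rel[of 1 0] rel[of 0 2] rel[of 2 0] rel[of 1 3] rel[of 3 1]
      rel[of 2 3] rel[of 3 2] rel[of 1 2] rel[of 2 1] by auto
  moreover have "f 0 \<in> F" "f 1 \<in> F" "f 2 \<in> F" "f 3 \<in> F"
    using f unfolding diamond_carrier_def by auto
  ultimately show "has_diamond F" unfolding has_diamond_def by blast
next
  assume "has_diamond F"
  then obtain a b c d where abcd: "a \<in> F" "b \<in> F" "c \<in> F" "d \<in> F"
    "a \<subset> b" "a \<subset> c" "b \<subset> d" "c \<subset> d" "\<not> b \<subseteq> c" "\<not> c \<subseteq> b"
    unfolding has_diamond_def by blast
  define f :: "nat \<Rightarrow> 'a set" where
    "f x = (if x = 0 then a else if x = 1 then b else if x = 2 then c else d)" for x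
  have "inj_on f diamond_carrier" "f ` diamond_carrier \<subseteq> F"
    "\<forall>u\<in>diamond_carrier. \<forall>v\<in>diamond_carrier. diamond_le u v \<longleftrightarrow> f u \<subseteq> f v"
    using abcd unfolding inj_on_def f_def diamond_carrier_def diamond_le_def by auto
  then show "induced_copy diamond_carrier diamond_le F" unfolding induced_copy_def by blast
qed

lemma induced_saturated_diamond_iff:
  "induced_saturated n diamond_carrier diamond_le F \<longleftrightarrow>
     F \<subseteq> Pow {0..<n} \<and> \<not> has_diamond F \<and>
     (\<forall>F'. F \<subset> F' \<and> F' \<subseteq> Pow {0..<n} \<longrightarrow> has_diamond F')"
  unfolding induced_saturated_def induced_copy_diamond_iff ..

lemma has_diamond_insert_saturated:
  assumes "induced_saturated n diamond_carrier diamond_le F" "S \<notin> F" "S \<subseteq> {0..<n}"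
  shows "has_diamond (insert S F)"
  using assms unfolding induced_saturated_diamond_iff by blast

text \<open>Replacing S by A turns a diamond of insert S F into one of F: strictness of the new
  relations follows from the incomparability of the two middle elements.\<close>

lemma has_diamond_insert_substitute:
  assumes "has_diamond (insert S F)" and "A \<in> F"
    and below: "\<And>B. B \<in> F \<Longrightarrow> B \<subset> S \<Longrightarrow> B \<subseteq> A"
    and above: "\<And>B. B \<in> F \<Longrightarrow> S \<subset> B \<Longrightarrow> A \<subseteq> B"
    and incomparable: "\<And>B. B \<in> F \<Longrightarrow> \<not> B \<subseteq> S \<Longrightarrow> \<not> S \<subseteq> B \<Longrightarrow> \<not> B \<subseteq> A \<and> \<not> A \<subseteq> B"
  shows "has_diamond F"
proof -
  obtain a b c d where mem: "a \<in> insert S F" "b \<in> insert S F" "c \<in> insert S F" "d \<in> insert S F"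
    and ord: "a \<subset> b" "a \<subset> c" "b \<subset> d" "c \<subset> d" "\<not> b \<subseteq> c" "\<not> c \<subseteq> b"
    using assms(1) unfolding has_diamond_def by blast
  define r where "r x = (if x = S then A else x)" for x
  have rF: "r x \<in> F" if "x \<in> insert S F" for x
    using that \<open>A \<in> F\<close> unfolding r_def by auto
  have "r a \<subset> r b \<and> r a \<subset> r c \<and> r b \<subset> r d \<and> r c \<subset> r d \<and> \<not> r b \<subseteq> r c \<and> \<not> r c \<subseteq> r b"
  proof -
    consider "a = S" | "b = S" | "c = S" | "d = S" | "S \<notin> {a, b, c, d}" by blast
    then show ?thesis
    proof cases
      case 1
      with ord mem have "b \<in> F" "c \<in> F" "d \<in> F" "b \<noteq> S" "c \<noteq> S" "d \<noteq> S" by auto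
      moreover from this have "A \<subseteq> b" "A \<subseteq> c" using 1 ord above by simp_all
      ultimately show ?thesis using 1 ord unfolding r_def by auto
    next
      case 2
      with ord mem have "a \<in> F" "c \<in> F" "d \<in> F" "a \<noteq> S" "c \<noteq> S" "d \<noteq> S" by auto
      moreover from this have "a \<subseteq> A" "A \<subseteq> d" "\<not> c \<subseteq> A \<and> \<not> A \<subseteq> c"
        using 2 ord below[of a] above[of d] incomparable[of c] by simp_all
      ultimately show ?thesis using 2 ord unfolding r_def by auto
    next
      case 3
      with ord mem have "a \<in> F" "b \<in> F" "d \<in> F" "a \<noteq> S" "b \<noteq> S" "d \<noteq> S" by auto
      moreover from this have "a \<subseteq> A" "A \<subseteq> d" "\<not> b \<subseteq> A \<and> \<not> A \<subseteq> b"
        using 3 ord below[of a] above[of d] incomparable[of b] by simp_all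
      ultimately show ?thesis using 3 ord unfolding r_def by auto
    next
      case 4
      with ord mem have "a \<in> F" "b \<in> F" "c \<in> F" "a \<noteq> S" "b \<noteq> S" "c \<noteq> S" by auto
      moreover from this have "b \<subseteq> A" "c \<subseteq> A" using 4 ord below by simp_all
      ultimately show ?thesis using 4 ord unfolding r_def by auto
    next
      case 5
      with ord show ?thesis unfolding r_def by auto
    qed
  qed
  with mem rF show ?thesis unfolding has_diamond_def by blast
qed

lemma induced_saturated_diamond_separates:
  assumes sat: "induced_saturated n diamond_carrier diamond_le F"
    and "i < n" "j < n" "i \<noteq> j"
  shows "\<exists>B\<in>F. i \<in> B \<longleftrightarrow> j \<notin> B"
proof (rule ccontr)
  assume "\<not> ?thesis"
  then have same: "i \<in> B \<longleftrightarrow> j \<in> B" if "B \<in> F" for B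
    using that by blast
  have Fsub: "F \<subseteq> Pow {0..<n}" and no_diamond: "\<not> has_diamond F"
    using sat unfolding induced_saturated_diamond_iff by auto
  then have "finite F" by (meson finite_Pow_iff finite_atLeastLessThan finite_subset)
  show False
  proof (cases "\<exists>A\<in>F. i \<notin> A")
    case True
    then obtain A where A: "A \<in> F" "i \<notin> A"
      and maximal: "\<And>B. B \<in> F \<Longrightarrow> i \<notin> B \<Longrightarrow> A \<subseteq> B \<Longrightarrow> A = B"
      using finite_has_maximal[of "{A\<in>F. i \<notin> A}"] \<open>finite F\<close> by auto
    define S where "S = insert i A"
    have "j \<notin> S" using A same \<open>i \<noteq> j\<close> unfolding S_def by auto
    then have "S \<notin> F" using same unfolding S_def by blast
    moreover have "S \<subseteq> {0..<n}" using A Fsub \<open>i < n\<close> unfolding S_def by auto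
    ultimately have "has_diamond (insert S F)" by (rule has_diamond_insert_saturated[OF sat])
    moreover have "B \<subseteq> A" if "B \<in> F" "B \<subset> S" for B
      using that same[of B] \<open>j \<notin> S\<close> unfolding S_def by auto
    moreover have "\<not> B \<subseteq> A \<and> \<not> A \<subseteq> B" if "B \<in> F" "\<not> B \<subseteq> S" "\<not> S \<subseteq> B" for B
      using that maximal[of B] unfolding S_def by auto
    ultimately have "has_diamond F"
      using has_diamond_insert_substitute[of S F A] A unfolding S_def by blast
    with no_diamond show False ..
  next
    case False
    have "F \<noteq> {}"
    proof
      assume "F = {}"
      then have "has_diamond {{} :: nat set}"
        using has_diamond_insert_saturated[OF sat, of "{}"] by auto
      then show False unfolding has_diamond_def by auto
    qed
    then obtain A where A: "A \<in> F" and minimal: "\<And>B. B \<in> F \<Longrightarrow> B \<subseteq> A \<Longrightarrow> A = B"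
      using finite_has_minimal[OF \<open>finite F\<close>] by blast
    define S where "S = A - {i}"
    have "S \<notin> F" using False unfolding S_def by blast
    moreover have "S \<subseteq> {0..<n}" using A Fsub unfolding S_def by auto
    ultimately have "has_diamond (insert S F)" by (rule has_diamond_insert_saturated[OF sat])
    moreover have "\<not> B \<subseteq> S" if "B \<in> F" for B
      using that False unfolding S_def by auto
    moreover have "A \<subseteq> B" if "B \<in> F" "S \<subset> B" for B
      using that False unfolding S_def by auto
    moreover have "\<not> B \<subseteq> A \<and> \<not> A \<subseteq> B" if "B \<in> F" "\<not> S \<subseteq> B" for B
      using that minimal[of B] unfolding S_def by auto
    ultimately have "has_diamond F"
      using has_diamond_insert_substitute[of S F A] A by blast
    with no_diamond show False ..
  qed
qed

lemma nat_ceiling_log2_le: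
  assumes "0 < n" "n \<le> 2 ^ m"
  shows "nat \<lceil>log 2 (real n)\<rceil> \<le> m"
proof -
  have "real n \<le> 2 powr real m" using assms(2) by (simp add: powr_realpow)
  then have "log 2 (real n) \<le> real m" using assms(1) by (subst log_le_iff) auto
  then show ?thesis by (simp add: nat_le_iff ceiling_le_iff)
qed

lemma induced_saturated_diamond_card_ge:
  assumes sat: "induced_saturated n diamond_carrier diamond_le F" and "0 < n"
  shows "nat \<lceil>log 2 (real n)\<rceil> \<le> card F"
proof -
  have "finite F" using sat unfolding induced_saturated_diamond_iff
    by (meson finite_Pow_iff finite_atLeastLessThan finite_subset)
  have "inj_on (\<lambda>i. {B\<in>F. i \<in> B}) {0..<n}"
  proof (rule inj_onI, rule ccontr)
    fix i j assume "i \<in> {0..<n}" "j \<in> {0..<n}" "{B\<in>F. i \<in> B} = {B\<in>F. j \<in> B}" "i \<noteq> j"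
    then show False using induced_saturated_diamond_separates[OF sat, of i j] by auto
  qed
  then have "card {0..<n} \<le> card (Pow F)"
    by (rule card_inj_on_le) (auto simp: \<open>finite F\<close>)
  then have "n \<le> 2 ^ card F" by (simp add: card_Pow \<open>finite F\<close>)
  with \<open>0 < n\<close> show ?thesis by (rule nat_ceiling_log2_le)
qed

definition initial_segments :: "nat \<Rightarrow> nat set set" where
  "initial_segments n = (\<lambda>k. {0..<k}) ` {0..n}"

lemma card_initial_segments: "card (initial_segments n) = n + 1"
proof -
  have "inj_on (\<lambda>k. {0..<k}) {0..n}"
    by (rule inj_onI) (metis atLeast0LessThan lessThan_eq_iff)
  then show ?thesis unfolding initial_segments_def by (simp add: card_image)
qed

lemma initial_segments_saturated: "induced_saturated n diamond_carrier diamond_le (initial_segments n)"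
  unfolding induced_saturated_diamond_iff
proof (intro conjI allI impI)
  show "initial_segments n \<subseteq> Pow {0..<n}" unfolding initial_segments_def by auto
  have "b \<subseteq> c \<or> c \<subseteq> b" if "b \<in> initial_segments n" "c \<in> initial_segments n" for b c
    using that unfolding initial_segments_def by (auto simp: nat_le_linear)
  then show "\<not> has_diamond (initial_segments n)" unfolding has_diamond_def by blast
next
  fix F' assume F': "initial_segments n \<subset> F' \<and> F' \<subseteq> Pow {0..<n}"
  then obtain S where "S \<in> F'" "S \<notin> initial_segments n" by blast
  then have S: "S \<in> F'" "S \<subseteq> {0..<n}" and not_segment: "\<And>m. m \<le> n \<Longrightarrow> S \<noteq> {0..<m}"
    using F' unfolding initial_segments_def by auto
  have "\<not> {0..<n} \<subseteq> S" using S(2) not_segment[of n] by blast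
  then obtain m where "m < n" "m \<notin> S" by (meson atLeastLessThan_iff subsetI zero_le)
  define k where "k = (LEAST k. k \<notin> S)"
  have "k \<notin> S" unfolding k_def using \<open>m \<notin> S\<close> by (rule LeastI)
  have "k \<le> m" unfolding k_def using \<open>m \<notin> S\<close> by (rule Least_le)
  have "{0..<k} \<subseteq> S"
  proof
    fix y assume "y \<in> {0..<k}"
    then show "y \<in> S" using not_less_Least[of y "\<lambda>k. k \<notin> S"] unfolding k_def by auto
  qed
  moreover have "S \<noteq> {0..<k}"
    using not_segment \<open>k \<le> m\<close> \<open>m < n\<close> by simp
  ultimately obtain x where x: "x \<in> S" "x \<notin> {0..<k}" by blast
  with \<open>k \<notin> S\<close> have "k < x" by (cases "x = k") auto
  have "x < n" using x S(2) by auto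
  have segment: "{0..<j} \<in> F'" if "j \<le> n" for j
  proof -
    have "{0..<j} \<in> initial_segments n" using that unfolding initial_segments_def by simp
    with F' show ?thesis by blast
  qed
  have segments: "{} \<in> F'" "{0..<n} \<in> F'" "{0..<Suc k} \<in> F'"
    using segment[of 0] segment[of n] segment[of "Suc k"] \<open>k < x\<close> \<open>x < n\<close> by auto
  have "{} \<subset> S" using not_segment[of 0] by auto
  moreover have "{} \<subset> {0..<Suc k}" by auto
  moreover have "S \<subset> {0..<n}" using not_segment[of n] S(2) by auto
  moreover have "{0..<Suc k} \<subset> {0..<n}" using \<open>k < x\<close> \<open>x < n\<close> by auto
  moreover have "\<not> S \<subseteq> {0..<Suc k}" "\<not> {0..<Suc k} \<subseteq> S"
    using x(1) \<open>k < x\<close> \<open>k \<notin> S\<close> by auto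
  ultimately show "has_diamond F'"
    by (rule has_diamondI[OF segments(1) S(1) segments(3) segments(2)])
qed

lemma finite_card_induced_saturated: "finite {card F | F. induced_saturated n P le F}"
proof (rule finite_subset)
  show "{card F | F. induced_saturated n P le F} \<subseteq> card ` Pow (Pow {0..<n})"
    unfolding induced_saturated_def by auto
qed simp

lemma isat_le_card:
  "induced_saturated n P le F \<Longrightarrow> isat n P le \<le> card F"
  unfolding isat_def by (rule Min_le[OF finite_card_induced_saturated]) blast

lemma le_isat:
  assumes "induced_saturated n P le F"
    and "\<And>F. induced_saturated n P le F \<Longrightarrow> m \<le> card F"
  shows "m \<le> isat n P le"
  unfolding isat_def using assms
  by (subst Min_ge_iff[OF finite_card_induced_saturated]) auto

theorem theorem1p5:
  fixes n :: nat
  assumes "n \<ge> 2"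
  shows "nat (ceiling (log 2 (real n))) \<le> isat n diamond_carrier diamond_le
       \<and> isat n diamond_carrier diamond_le \<le> n + 1"
proof
  show "nat \<lceil>log 2 (real n)\<rceil> \<le> isat n diamond_carrier diamond_le"
    using initial_segments_saturated induced_saturated_diamond_card_ge assms
    by (intro le_isat) auto
  show "isat n diamond_carrier diamond_le \<le> n + 1"
    using isat_le_card[OF initial_segments_saturated] by (simp add: card_initial_segments)
qed

end
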